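(* Fix $a\in(0,2)$ and $\alpha\in[0,1]$, and let $\varepsilon=n^{-a}$. Let $S,S'\in\mathcal{O}^{\varepsilon,2}_{\alpha N}$ and let $\mathbf{S}$ have distribution $\mathbb{R}(n,\alpha N)$. Then \[ \frac{\Pr(\mathbf{S}=S)}{\Pr(\mathbf{S}=S')}\le\exp\left(O\left(n^{2-a}\right)\right). \]
   Context: Throughout, $n\equiv1$ or $3\pmod 6$, $N=\binom n2/3$, $\alpha N$ is treated as an integer, and asymptotics are as $n\to\infty$. A partial system is a 3-uniform hypergraph on $[n]$ in which every pair lies in at most one hyperedge; $\mathcal{O}_m$ is the set of ordered partial systems with $m$ hyperedges and $S_i$ the first $i$ hyperedges of $S$. $G(S)$ is the graph on $[n]$ of pairs not covered by hyperedges of $S$. For a graph $G$ with $n$ vertices and $m$ edges, $d(G)=m/\binom n2$, and $G$ is $(\varepsilon,h)$-quasirandom if every set $A$ of at most $h$ vertices satisfies $\left|\bigcap_{w\in A}N_G(w)\right|=(1\pm\varepsilon)d(G)^{|A|}n$. $\mathcal{O}^{\varepsilon,h}_m$ is the set of $S\in\mathcal{O}_m$ with $G(S_i)$ $(\varepsilon,h)$-quasirandom for all $i\le m$. The triangle removal process starts from $K_n$ and repeatedly removes the edges of a uniformly random triangle of the current graph; $\mathbb{R}(n,m)$ is the distribution of the ordered sequence of the first $m$ removed triangles (an element of $\mathcal{O}_m$), or the symbol $*$ if the process runs out of triangles before $m$ steps. *)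

theory Defs
  imports "HOL-Probability.Probability"
begin

definition pairs_of :: "nat set \<Rightarrow> nat set set" where
  "pairs_of T = {e. e \<subseteq> T \<and> card e = 2}"

definition Nsys :: "nat \<Rightarrow> nat" where
  "Nsys n = (n choose 2) div 3"

definition ordered_systems :: "nat \<Rightarrow> nat \<Rightarrow> nat set list set" where
  "ordered_systems n m = {S. length S = m
      \<and> (\<forall>i<m. S ! i \<subseteq> {1..n} \<and> card (S ! i) = 3)
      \<and> (\<forall>i<m. \<forall>j<m. i \<noteq> j \<longrightarrow> card (S ! i \<inter> S ! j) \<le> 1)}"

definition uncovered :: "nat \<Rightarrow> nat set list \<Rightarrow> nat set set" where
  "uncovered n S = pairs_of {1..n} - (\<Union>T\<in>set S. pairs_of T)"

definition density :: "nat \<Rightarrow> nat set set \<Rightarrow> real" where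
  "density n G = real (card G) / real (n choose 2)"

definition common_nbhd :: "nat \<Rightarrow> nat set set \<Rightarrow> nat set \<Rightarrow> nat set" where
  "common_nbhd n G A = {v \<in> {1..n}. \<forall>w\<in>A. {v, w} \<in> G}"

definition quasirandom :: "nat \<Rightarrow> real \<Rightarrow> nat \<Rightarrow> nat set set \<Rightarrow> bool" where
  "quasirandom n eps h G \<longleftrightarrow>
     (\<forall>A. A \<subseteq> {1..n} \<and> card A \<le> h \<longrightarrow>
        (1 - eps) * density n G ^ card A * real n \<le> real (card (common_nbhd n G A)) \<and>
        real (card (common_nbhd n G A)) \<le> (1 + eps) * density n G ^ card A * real n)"

definition qr_systems :: "nat \<Rightarrow> real \<Rightarrow> nat \<Rightarrow> nat \<Rightarrow> nat set list set" where
  "qr_systems n eps h m = {S \<in> ordered_systems n m.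
      \<forall>i\<le>m. quasirandom n eps h (uncovered n (take i S))}"

definition triangles :: "nat \<Rightarrow> nat set set \<Rightarrow> nat set set" where
  "triangles n G = {T. T \<subseteq> {1..n} \<and> card T = 3 \<and> pairs_of T \<subseteq> G}"

text \<open>Triangle removal process: distribution of the ordered list of the first m removed
  triangles; None plays the role of the symbol * (process got stuck).\<close>
fun trp :: "nat \<Rightarrow> nat \<Rightarrow> nat set list option pmf" where
  "trp n 0 = return_pmf (Some [])"
| "trp n (Suc m) = bind_pmf (trp n m) (\<lambda>r. case r of
      None \<Rightarrow> return_pmf None
    | Some S \<Rightarrow> (if triangles n (uncovered n S) = {} then return_pmf None
                else map_pmf (\<lambda>T. Some (S @ [T])) (pmf_of_set (triangles n (uncovered n S)))))"

end

theory Submission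
  imports Defs
begin

text \<open>The process chooses each triangle uniformly, so the probability of producing a system
  \<open>S\<close> is the product over the steps of \<open>1 / t\<^sub>i(S)\<close>, where \<open>t\<^sub>i(S)\<close> counts the triangles of
  \<open>G(S\<^sub>i)\<close>. The graphs \<open>G(S\<^sub>i)\<close> and \<open>G(S'\<^sub>i)\<close> have the same number of edges, and double
  counting shows \<open>3 t\<^sub>i = \<Sum>\<^sub>e |N(e)|\<close>, so quasirandomness determines \<open>t\<^sub>i\<close> up to a factor
  \<open>1 \<plusminus> \<epsilon>\<close>. Hence each factor of the ratio is at most \<open>(1 + \<epsilon>)/(1 - \<epsilon>) \<le> exp (3\<epsilon>)\<close>, and
  there are at most \<open>n\<^sup>2\<close> factors.\<close>

lemma finite_pairs_of: "finite T \<Longrightarrow> finite (pairs_of T)"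
  unfolding pairs_of_def by (rule finite_subset[of _ "Pow T"]) auto

lemma pairs_of_triple:
  assumes "x \<noteq> y" "y \<noteq> z" "x \<noteq> z"
  shows "pairs_of {x, y, z} = {{x, y}, {x, z}, {y, z}}"
proof (intro set_eqI iffI)
  fix e assume "e \<in> pairs_of {x, y, z}"
  then obtain u v where "e = {u, v}" "u \<noteq> v" "e \<subseteq> {x, y, z}"
    unfolding pairs_of_def by (auto simp: card_2_iff)
  then show "e \<in> {{x, y}, {x, z}, {y, z}}" by auto
qed (use assms in \<open>auto simp: pairs_of_def\<close>)

lemma card_pairs_of_card_3:
  assumes "card T = 3"
  shows "card (pairs_of T) = 3"
proof -
  obtain x y z where "T = {x, y, z}" "x \<noteq> y" "y \<noteq> z" "x \<noteq> z"
    using assms card_3_iff by metis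
  then show ?thesis by (simp add: pairs_of_triple doubleton_eq_iff card_insert_if)
qed

lemma finite_triangles: "finite (triangles n G)"
  unfolding triangles_def by (rule finite_subset[of _ "Pow {1..n}"]) auto

lemma card_pairs_of_atLeastAtMost: "card (pairs_of {1..n}) = n choose 2"
  unfolding pairs_of_def using n_subsets[of "{1..n}" 2] by simp

lemma ordered_systems_nth:
  assumes "S \<in> ordered_systems n m" "i < m"
  shows "S ! i \<subseteq> {1..n}" "card (S ! i) = 3"
  using assms unfolding ordered_systems_def by auto

lemma ordered_systems_pairs_of_subset:
  assumes "S \<in> ordered_systems n m" "i < m"
  shows "pairs_of (S ! i) \<subseteq> pairs_of {1..n}"
  using ordered_systems_nth(1)[OF assms] unfolding pairs_of_def by auto

lemma ordered_systems_pairs_of_disjoint: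
  assumes S: "S \<in> ordered_systems n m" and "i < m" "j < m" "i \<noteq> j"
  shows "pairs_of (S ! i) \<inter> pairs_of (S ! j) = {}"
proof (rule ccontr)
  assume "pairs_of (S ! i) \<inter> pairs_of (S ! j) \<noteq> {}"
  then obtain e where "e \<subseteq> S ! i \<inter> S ! j" "card e = 2" unfolding pairs_of_def by auto
  moreover have "finite (S ! i)" using ordered_systems_nth(2)[OF S \<open>i < m\<close>] card.infinite by force
  ultimately have "2 \<le> card (S ! i \<inter> S ! j)" by (metis card_mono finite_Int)
  with assms show False unfolding ordered_systems_def by force
qed

lemma take_in_ordered_systems:
  "S \<in> ordered_systems n (Suc m) \<Longrightarrow> take m S \<in> ordered_systems n m"
  unfolding ordered_systems_def by auto

lemma uncovered_take:
  assumes "S \<in> ordered_systems n m" "i \<le> m"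
  shows "uncovered n (take i S) = pairs_of {1..n} - (\<Union>j<i. pairs_of (S ! j))"
proof -
  have "set (take i S) = (\<lambda>j. S ! j) ` {..<i}"
    using assms nth_image[of i S] unfolding ordered_systems_def by (simp add: lessThan_atLeast0)
  then show ?thesis unfolding uncovered_def by simp
qed

lemma nth_in_triangles_uncovered:
  assumes S: "S \<in> ordered_systems n m" and "i < m"
  shows "S ! i \<in> triangles n (uncovered n (take i S))"
proof -
  have "pairs_of (S ! i) \<subseteq> pairs_of {1..n}"
    by (rule ordered_systems_pairs_of_subset[OF assms])
  moreover have "pairs_of (S ! i) \<inter> pairs_of (S ! j) = {}" if "j < i" for j
    using ordered_systems_pairs_of_disjoint[OF S] that \<open>i < m\<close> by simp
  ultimately show ?thesis
    using ordered_systems_nth[OF S \<open>i < m\<close>] uncovered_take[OF S] \<open>i < m\<close>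
    unfolding triangles_def by auto
qed

lemma card_uncovered_take:
  assumes S: "S \<in> ordered_systems n m" and "i \<le> m"
  shows "card (uncovered n (take i S)) = (n choose 2) - 3 * i"
proof -
  have finite: "finite (pairs_of (S ! j))" if "j < i" for j
    using ordered_systems_nth(2)[OF S] that \<open>i \<le> m\<close> card.infinite
    by (metis finite_pairs_of less_le_trans order.strict_implies_order zero_neq_numeral)
  have "card (\<Union>j<i. pairs_of (S ! j)) = (\<Sum>j<i. card (pairs_of (S ! j)))"
    using ordered_systems_pairs_of_disjoint[OF S] \<open>i \<le> m\<close> finite
    by (intro card_UN_disjoint) auto
  also have "\<dots> = 3 * i"
    using ordered_systems_nth(2)[OF S] \<open>i \<le> m\<close> by (simp add: card_pairs_of_card_3)
  finally have "card (\<Union>j<i. pairs_of (S ! j)) = 3 * i" .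
  moreover have "(\<Union>j<i. pairs_of (S ! j)) \<subseteq> pairs_of {1..n}"
    using ordered_systems_pairs_of_subset[OF S] \<open>i \<le> m\<close> by (intro UN_least) simp
  ultimately have "card (uncovered n (take i S)) = card (pairs_of {1..n}) - 3 * i"
    using uncovered_take[OF S \<open>i \<le> m\<close>] finite by (simp add: card_Diff_subset)
  then show ?thesis by (simp only: card_pairs_of_atLeastAtMost)
qed

subsection \<open>The probability of a partial system\<close>

lemma pmf_trp_Suc_snoc:
  assumes T: "T \<in> triangles n (uncovered n S)"
  shows "pmf (trp n (Suc m)) (Some (S @ [T])) =
    pmf (trp n m) (Some S) / real (card (triangles n (uncovered n S)))"
proof -
  define c where "c = 1 / real (card (triangles n (uncovered n S)))"
  have step: "pmf (case r of
        None \<Rightarrow> return_pmf None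
      | Some S\<^sub>1 \<Rightarrow> (if triangles n (uncovered n S\<^sub>1) = {} then return_pmf None
          else map_pmf (\<lambda>T. Some (S\<^sub>1 @ [T])) (pmf_of_set (triangles n (uncovered n S\<^sub>1)))))
      (Some (S @ [T])) = c * indicator {Some S} r" for r
  proof (cases "r = Some S")
    case True
    have "inj (\<lambda>T. Some (S @ [T]))" by (rule injI) simp
    then have "pmf (map_pmf (\<lambda>T. Some (S @ [T])) (pmf_of_set (triangles n (uncovered n S))))
        (Some (S @ [T])) = c"
      using T finite_triangles[of n "uncovered n S"]
      by (subst pmf_map_inj', simp, subst pmf_of_set) (auto simp: c_def)
    then show ?thesis using True T by auto
  qed (auto simp: pmf_eq_0_set_pmf split: option.split)
  have "pmf (trp n (Suc m)) (Some (S @ [T])) =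
      measure_pmf.expectation (trp n m) (\<lambda>r. c * indicator {Some S} r)"
    by (simp only: trp.simps pmf_bind step)
  also have "\<dots> = c * pmf (trp n m) (Some S)"
    by (simp add: measure_pmf_single)
  finally show ?thesis by (simp add: c_def)
qed

lemma pmf_trp_Some:
  assumes "S \<in> ordered_systems n m"
  shows "pmf (trp n m) (Some S) = (\<Prod>i<m. 1 / real (card (triangles n (uncovered n (take i S)))))"
  using assms
proof (induction m arbitrary: S)
  case 0
  then show ?case unfolding ordered_systems_def by simp
next
  case (Suc m)
  have "S = take m S @ [S ! m]"
    using Suc.prems unfolding ordered_systems_def by (simp add: take_Suc_conv_app_nth[symmetric])
  moreover have "S ! m \<in> triangles n (uncovered n (take m S))"
    using nth_in_triangles_uncovered[OF Suc.prems] by simp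
  ultimately have "pmf (trp n (Suc m)) (Some S) =
      pmf (trp n m) (Some (take m S)) / real (card (triangles n (uncovered n (take m S))))"
    by (metis pmf_trp_Suc_snoc)
  then show ?case
    using Suc.IH[OF take_in_ordered_systems[OF Suc.prems]] by (simp add: field_simps)
qed

subsection \<open>Counting triangles in a quasirandom graph\<close>

lemma card_common_nbhd_edge:
  assumes G: "G \<subseteq> pairs_of {1..n}" and e: "e \<in> G"
  shows "card (common_nbhd n G e) = card {T \<in> triangles n G. e \<subseteq> T}"
proof -
  obtain u w where uw: "e = {u, w}" "u \<noteq> w" "u \<in> {1..n}" "w \<in> {1..n}"
    using e G unfolding pairs_of_def by (auto simp: card_2_iff)
  have no_loops: "{v} \<notin> G" for v
    using G unfolding pairs_of_def by auto
  have nbhd: "v \<in> common_nbhd n G e \<longleftrightarrow> v \<in> {1..n} \<and> v \<noteq> u \<and> v \<noteq> w \<and> {v, u} \<in> G \<and> {v, w} \<in> G"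
    for v
    using no_loops[of v] unfolding common_nbhd_def uw(1) by auto
  have "inj_on (\<lambda>v. insert v e) (common_nbhd n G e)"
  proof (rule inj_onI)
    fix v v' assume v: "v \<in> common_nbhd n G e" and "insert v e = insert v' e"
    then have "v \<in> insert v' {u, w}" using uw(1) by blast
    then show "v = v'" using v nbhd by blast
  qed
  moreover have "(\<lambda>v. insert v e) ` common_nbhd n G e = {T \<in> triangles n G. e \<subseteq> T}"
  proof (intro set_eqI iffI)
    fix T assume "T \<in> (\<lambda>v. insert v e) ` common_nbhd n G e"
    then obtain v where v: "v \<in> common_nbhd n G e" "T = {v, u, w}" using uw(1) by blast
    then have "v \<in> {1..n}" "v \<noteq> u" "v \<noteq> w" "{v, u} \<in> G" "{v, w} \<in> G"
      using nbhd by blast+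
    then have "T \<subseteq> {1..n}" "card T = 3" "pairs_of T \<subseteq> G"
      using v(2) uw e by (simp_all add: pairs_of_triple)
    then show "T \<in> {T \<in> triangles n G. e \<subseteq> T}"
      using v(2) uw(1) unfolding triangles_def by blast
  next
    fix T assume T: "T \<in> {T \<in> triangles n G. e \<subseteq> T}"
    then have "card (T - e) = 1"
      using uw(1,2) by (simp add: triangles_def card_Diff_subset)
    then obtain v where "T - e = {v}" by (auto simp: card_1_singleton_iff)
    then have Tv: "T = {v, u, w}" "v \<noteq> u" "v \<noteq> w" using T uw(1) by auto
    moreover have "pairs_of {v, u, w} \<subseteq> G" "v \<in> {1..n}"
      using T Tv(1) unfolding triangles_def by auto
    ultimately have "v \<in> common_nbhd n G e"
      using uw(2) by (simp add: nbhd pairs_of_triple)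
    then show "T \<in> (\<lambda>v. insert v e) ` common_nbhd n G e" using Tv uw(1) by blast
  qed
  ultimately show ?thesis by (metis card_image)
qed

lemma sum_card_common_nbhd:
  assumes G: "G \<subseteq> pairs_of {1..n}"
  shows "(\<Sum>e\<in>G. card (common_nbhd n G e)) = 3 * card (triangles n G)"
proof -
  have "finite G" using G finite_pairs_of[of "{1..n}"] finite_subset by auto
  have "3 * card (triangles n G) = (\<Sum>T\<in>triangles n G. card (pairs_of T))"
    by (simp add: triangles_def card_pairs_of_card_3)
  also have "\<dots> = (\<Sum>T\<in>triangles n G. \<Sum>e\<in>G. if e \<subseteq> T then 1 else 0)"
  proof (rule sum.cong[OF refl])
    fix T assume "T \<in> triangles n G"
    then have "pairs_of T = {e \<in> G. e \<subseteq> T}"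
      using G unfolding triangles_def pairs_of_def by auto
    then show "card (pairs_of T) = (\<Sum>e\<in>G. if e \<subseteq> T then 1 else 0)"
      using \<open>finite G\<close> by (simp add: sum.inter_filter[symmetric])
  qed
  also have "\<dots> = (\<Sum>e\<in>G. \<Sum>T\<in>triangles n G. if e \<subseteq> T then 1 else 0)"
    by (rule sum.swap)
  also have "\<dots> = (\<Sum>e\<in>G. card (common_nbhd n G e))"
    using card_common_nbhd_edge[OF G] finite_triangles
    by (intro sum.cong) (simp_all add: sum.inter_filter[symmetric])
  finally show ?thesis by simp
qed

lemma quasirandom_card_triangles:
  assumes G: "G \<subseteq> pairs_of {1..n}" and Q: "quasirandom n eps 2 G"
  defines "K \<equiv> real (card G) * density n G ^ 2 * real n"
  shows "(1 - eps) * K \<le> 3 * real (card (triangles n G))"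
    and "3 * real (card (triangles n G)) \<le> (1 + eps) * K"
proof -
  have count: "3 * real (card (triangles n G)) = (\<Sum>e\<in>G. real (card (common_nbhd n G e)))"
    using sum_card_common_nbhd[OF G] by (metis of_nat_mult of_nat_numeral of_nat_sum)
  have edge: "(1 - eps) * density n G ^ 2 * real n \<le> real (card (common_nbhd n G e))"
    "real (card (common_nbhd n G e)) \<le> (1 + eps) * density n G ^ 2 * real n" if "e \<in> G" for e
  proof -
    have "e \<subseteq> {1..n}" "card e = 2" using that G unfolding pairs_of_def by auto
    then show "(1 - eps) * density n G ^ 2 * real n \<le> real (card (common_nbhd n G e))"
      "real (card (common_nbhd n G e)) \<le> (1 + eps) * density n G ^ 2 * real n"
      using Q[unfolded quasirandom_def, rule_format, of e] by auto
  qed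
  show "(1 - eps) * K \<le> 3 * real (card (triangles n G))"
    using sum_bounded_below[of G "(1 - eps) * density n G ^ 2 * real n"] edge(1)
    unfolding count K_def by (simp add: algebra_simps)
  show "3 * real (card (triangles n G)) \<le> (1 + eps) * K"
    using sum_bounded_above[of G _ "(1 + eps) * density n G ^ 2 * real n"] edge(2)
    unfolding count K_def by (simp add: algebra_simps)
qed

lemma quasirandom_card_triangles_ratio:
  assumes "G \<subseteq> pairs_of {1..n}" "G' \<subseteq> pairs_of {1..n}" "card G = card G'"
    and "quasirandom n eps 2 G" "quasirandom n eps 2 G'"
    and "0 \<le> eps" "eps < 1" "triangles n G \<noteq> {}"
  shows "real (card (triangles n G')) / real (card (triangles n G)) \<le> (1 + eps) / (1 - eps)"
proof -
  define K where "K = real (card G) * density n G ^ 2 * real n"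
  have "density n G' = density n G" using assms(3) unfolding density_def by simp
  then have "(1 - eps) * (3 * real (card (triangles n G'))) \<le> (1 - eps) * ((1 + eps) * K)"
    using quasirandom_card_triangles(2)[OF assms(2,5)] assms(3,7) unfolding K_def
    by (intro mult_left_mono) auto
  also have "\<dots> = (1 + eps) * ((1 - eps) * K)" by simp
  also have "\<dots> \<le> (1 + eps) * (3 * real (card (triangles n G)))"
    using quasirandom_card_triangles(1)[OF assms(1,4)] assms(6) unfolding K_def
    by (intro mult_left_mono) auto
  finally show ?thesis
    using assms(7,8) finite_triangles[of n G] by (simp add: divide_simps mult.commute)
qed

lemma one_plus_divide_one_minus_le_exp:
  fixes eps :: real
  assumes "0 \<le> eps" "eps \<le> 1/2"
  shows "(1 + eps) / (1 - eps) \<le> exp (3 * eps)"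
proof -
  have "eps * (2 * eps) \<le> eps * 1"
    using assms by (intro mult_left_mono) auto
  then have "1 \<le> (1 - eps) * (1 + 2 * eps)"
    by (simp add: algebra_simps)
  also have "\<dots> \<le> (1 - eps) * exp (2 * eps)"
    using assms exp_ge_add_one_self[of "2 * eps"] by (intro mult_left_mono) auto
  finally have exp_bound: "1 \<le> (1 - eps) * exp (2 * eps)" .
  have "1 + eps \<le> exp eps * 1" using exp_ge_add_one_self[of eps] by simp
  also have "\<dots> \<le> exp eps * ((1 - eps) * exp (2 * eps))"
    using exp_bound by (intro mult_left_mono) auto
  also have "\<dots> = (1 - eps) * exp (3 * eps)" by (simp add: exp_add[symmetric] algebra_simps)
  finally show ?thesis using assms by (simp add: divide_simps mult.commute)
qed

lemma pmf_trp_ratio_le: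
  assumes eps: "0 \<le> eps" "eps \<le> 1/2"
    and S: "S \<in> qr_systems n eps 2 m" and S': "S' \<in> qr_systems n eps 2 m"
  shows "pmf (trp n m) (Some S) / pmf (trp n m) (Some S') \<le> exp (3 * eps * real m)"
proof -
  have So: "S \<in> ordered_systems n m" and S'o: "S' \<in> ordered_systems n m"
    using S S' unfolding qr_systems_def by auto
  define t where "t S i = real (card (triangles n (uncovered n (take i S))))" for S i
  have t_pos: "t S i > 0" "t S' i > 0" if "i < m" for i
    using nth_in_triangles_uncovered[OF So that] nth_in_triangles_uncovered[OF S'o that]
      finite_triangles unfolding t_def by (auto simp: card_gt_0_iff)
  have step: "t S' i / t S i \<le> (1 + eps) / (1 - eps)" if "i < m" for i
    unfolding t_def
  proof (rule quasirandom_card_triangles_ratio)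
    show "uncovered n (take i S) \<subseteq> pairs_of {1..n}" "uncovered n (take i S') \<subseteq> pairs_of {1..n}"
      unfolding uncovered_def by auto
    show "card (uncovered n (take i S)) = card (uncovered n (take i S'))"
      using card_uncovered_take[OF So] card_uncovered_take[OF S'o] that by simp
    show "quasirandom n eps 2 (uncovered n (take i S))" "quasirandom n eps 2 (uncovered n (take i S'))"
      using S S' that unfolding qr_systems_def by auto
    show "triangles n (uncovered n (take i S)) \<noteq> {}"
      using nth_in_triangles_uncovered[OF So that] by blast
  qed (use eps in auto)
  have "pmf (trp n m) (Some S) / pmf (trp n m) (Some S') = (\<Prod>i<m. t S' i / t S i)"
    unfolding pmf_trp_Some[OF So] pmf_trp_Some[OF S'o] t_def by (simp add: prod_dividef[symmetric])
  also have "\<dots> \<le> (\<Prod>i<m. (1 + eps) / (1 - eps))"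
    using step t_pos by (intro prod_mono) (auto intro: less_imp_le)
  also have "\<dots> \<le> exp (3 * eps) ^ m"
    using one_plus_divide_one_minus_le_exp[OF eps] eps by (simp add: power_mono)
  also have "\<dots> = exp (3 * eps * real m)" by (simp add: exp_of_nat_mult[symmetric] mult.commute)
  finally show ?thesis .
qed

lemma nat_floor_mult_Nsys_le_square:
  assumes "0 \<le> \<alpha>" "\<alpha> \<le> 1"
  shows "nat \<lfloor>\<alpha> * real (Nsys n)\<rfloor> \<le> n ^ 2"
proof -
  have "\<alpha> * real (Nsys n) \<le> real (Nsys n)" using assms by (simp add: mult_left_le_one_le)
  then have "nat \<lfloor>\<alpha> * real (Nsys n)\<rfloor> \<le> Nsys n" by linarith
  also have "\<dots> \<le> n choose 2" unfolding Nsys_def by simp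
  also have "\<dots> \<le> n ^ 2"
    by (cases "2 \<le> n") (auto intro: binomial_le_pow simp: binomial_eq_0)
  finally show ?thesis .
qed

theorem lemma2p7:
  fixes a \<alpha> :: real
  assumes "0 < a" "a < 2" "0 \<le> \<alpha>" "\<alpha> \<le> 1"
  shows "\<exists>C::real. \<exists>n0::nat. \<forall>n\<ge>n0. (n mod 6 = 1 \<or> n mod 6 = 3) \<longrightarrow>
           (let m = nat \<lfloor>\<alpha> * real (Nsys n)\<rfloor>; eps = real n powr (- a) in
            \<forall>S S'. S \<in> qr_systems n eps 2 m \<and> S' \<in> qr_systems n eps 2 m \<longrightarrow>
              pmf (trp n m) (Some S) / pmf (trp n m) (Some S') \<le> exp (C * real n powr (2 - a)))"
proof -
  have "((\<lambda>n. real n powr (- a)) \<longlongrightarrow> 0) sequentially"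
    using assms(1) by (intro tendsto_neg_powr filterlim_real_sequentially) auto
  then have "eventually (\<lambda>n. real n powr (- a) < 1/2) sequentially"
    by (rule order_tendstoD) simp
  then obtain n0 where n0: "\<And>n. n \<ge> n0 \<Longrightarrow> real n powr (- a) < 1/2"
    unfolding eventually_sequentially by blast
  have "pmf (trp n m) (Some S) / pmf (trp n m) (Some S') \<le> exp (3 * real n powr (2 - a))"
    if n: "n \<ge> n0" and m: "m = nat \<lfloor>\<alpha> * real (Nsys n)\<rfloor>"
      and S: "S \<in> qr_systems n (real n powr (- a)) 2 m" "S' \<in> qr_systems n (real n powr (- a)) 2 m"
    for n m S S'
  proof -
    have eps: "0 \<le> real n powr (- a)" "real n powr (- a) \<le> 1/2" using n0[OF n] by auto
    have "real m \<le> real n ^ 2"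
      using nat_floor_mult_Nsys_le_square[OF assms(3,4)] m by (metis of_nat_le_iff of_nat_power)
    then have "real m \<le> real n powr 2" by simp
    have "pmf (trp n m) (Some S) / pmf (trp n m) (Some S') \<le> exp (3 * real n powr (- a) * real m)"
      by (rule pmf_trp_ratio_le[OF eps S])
    also have "\<dots> \<le> exp (3 * real n powr (- a) * real n powr 2)"
      using \<open>real m \<le> real n powr 2\<close> eps(1) by (subst exp_le_cancel_iff, intro mult_left_mono) auto
    also have "\<dots> = exp (3 * real n powr (2 - a))"
      by (simp add: mult.assoc flip: powr_add del: powr_numeral)
    finally show ?thesis .
  qed
  then show ?thesis unfolding Let_def by blast
qed

end
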